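(* Let $p\equiv 1\pmod 4$ be a prime with $p\ge 13$, let $\pi\in\mathbb{Z}[i]$ with $\pi\pi^*=p$, and let $C$ be an $(n,k)$ linear code over $G_\pi$. If $C$ corrects all errors of Mannheim weight $2$ or less, then $p^{n-k}\ge 8n^2+1$.
   Context: $G=\mathbb{Z}[i]$ is the ring of Gaussian integers, $\pi^*$ is the complex conjugate of $\pi$, and $G_\pi=G/\pi G$ (a field with $p$ elements). The Mannheim weight of $\beta\in G_\pi$ is $\min\{|a|+|b| : a+bi\equiv\beta \pmod \pi\}$; the Mannheim weight of a vector in $G_\pi^n$ is the sum of the Mannheim weights of its components. An $(n,k)$ linear code over $G_\pi$ is a $k$-dimensional subspace $C\subseteq G_\pi^n$ (so there are $p^{n-k}$ cosets). $C$ corrects all errors of weight $2$ or less if all vectors of $G_\pi^n$ of Mannheim weight at most $2$ lie in pairwise distinct cosets of $C$. *)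

theory Defs
  imports Complex_Main "HOL-Computational_Algebra.Primes"
begin

definition gauss_int :: "complex \<Rightarrow> bool" where
  "gauss_int z \<longleftrightarrow> Re z \<in> \<int> \<and> Im z \<in> \<int>"

text \<open>Congruence modulo pi in Z[i]: alpha and beta give the same element of G_pi = G / pi G.\<close>
definition gcong :: "complex \<Rightarrow> complex \<Rightarrow> complex \<Rightarrow> bool" where
  "gcong \<pi> \<alpha> \<beta> \<longleftrightarrow> (\<exists>\<gamma>. gauss_int \<gamma> \<and> \<alpha> - \<beta> = \<pi> * \<gamma>)"

definition mannheim_weight :: "complex \<Rightarrow> complex \<Rightarrow> nat" where
  "mannheim_weight \<pi> \<beta> =
     (LEAST w. \<exists>a b :: int. w = nat (\<bar>a\<bar> + \<bar>b\<bar>) \<and>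
                  gcong \<pi> (of_int a + of_int b * \<i>) \<beta>)"

text \<open>Representatives of vectors in G_pi^n: Gaussian integer vectors indexed by 0..<n, zero elsewhere.\<close>
definition gvecs :: "nat \<Rightarrow> (nat \<Rightarrow> complex) set" where
  "gvecs n = {x. (\<forall>i<n. gauss_int (x i)) \<and> (\<forall>i\<ge>n. x i = 0)}"

definition vcong :: "complex \<Rightarrow> nat \<Rightarrow> (nat \<Rightarrow> complex) \<Rightarrow> (nat \<Rightarrow> complex) \<Rightarrow> bool" where
  "vcong \<pi> n x y \<longleftrightarrow> (\<forall>i<n. gcong \<pi> (x i) (y i))"

definition vec_mannheim_weight :: "complex \<Rightarrow> nat \<Rightarrow> (nat \<Rightarrow> complex) \<Rightarrow> nat" where
  "vec_mannheim_weight \<pi> n x = (\<Sum>i<n. mannheim_weight \<pi> (x i))"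

text \<open>An (n,k) linear code over G_pi, represented by its full preimage C in Z[i]^n:
  C is a union of residue classes, closed under addition and scalar multiplication,
  and (C mod pi) has a basis of k vectors over G_pi.\<close>
definition linear_code :: "complex \<Rightarrow> nat \<Rightarrow> nat \<Rightarrow> (nat \<Rightarrow> complex) set \<Rightarrow> bool" where
  "linear_code \<pi> n k C \<longleftrightarrow>
     C \<subseteq> gvecs n \<and> (\<lambda>i. 0) \<in> C \<and>
     (\<forall>x\<in>C. \<forall>y\<in>C. (\<lambda>i. x i + y i) \<in> C) \<and>
     (\<forall>c x. gauss_int c \<and> x \<in> C \<longrightarrow> (\<lambda>i. c * x i) \<in> C) \<and>
     (\<forall>x\<in>gvecs n. \<forall>y\<in>C. vcong \<pi> n x y \<longrightarrow> x \<in> C) \<and>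
     (\<exists>b :: nat \<Rightarrow> nat \<Rightarrow> complex.
        (\<forall>j<k. b j \<in> C) \<and>
        (\<forall>x\<in>C. \<exists>l. (\<forall>j<k. gauss_int (l j)) \<and>
                      vcong \<pi> n x (\<lambda>i. \<Sum>j<k. l j * b j i)) \<and>
        (\<forall>l. (\<forall>j<k. gauss_int (l j)) \<and> vcong \<pi> n (\<lambda>i. \<Sum>j<k. l j * b j i) (\<lambda>i. 0)
              \<longrightarrow> (\<forall>j<k. gcong \<pi> (l j) 0)))"

definition corrects_weight2 :: "complex \<Rightarrow> nat \<Rightarrow> (nat \<Rightarrow> complex) set \<Rightarrow> bool" where
  "corrects_weight2 \<pi> n C \<longleftrightarrow>
     (\<forall>x\<in>gvecs n. \<forall>y\<in>gvecs n.
        vec_mannheim_weight \<pi> n x \<le> 2 \<and> vec_mannheim_weight \<pi> n y \<le> 2 \<and>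
        \<not> vcong \<pi> n x y \<longrightarrow> (\<lambda>i. x i - y i) \<notin> C)"

end

theory Submission
  imports Defs "HOL-Library.FuncSet"
begin

(* Proof idea (sphere-packing / coset counting).
   Since \<pi>\<pi>* = p, every Gaussian integer is congruent modulo \<pi> to exactly one of
   0, ..., p-1; this gives a residue map G -> {0..<p} and shows |G_\<pi>| = p.
   Gaussian integers a+bi with |a|+|b| <= 2 ("small" ones) are pairwise incongruent
   when p >= 13 is odd: their differences have norm at most 16, and a nonzero
   multiple of \<pi> has norm a positive multiple of p.
   We exhibit 8n^2+1 vectors of Mannheim weight at most 2 with small entries (the zero
   vector and, for every i, j < n, eight vectors supported on {i, j}).  Since C corrects
   weight-2 errors, no two of them differ by a codeword.
   Finally, a general packing lemma: if a set E of vectors contains no two that differ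
   by a codeword of an (n,k) code, then |E| * p^k <= p^n, because the map sending
   (e, l) to the coordinatewise residues of e + \<Sum> l_j b_j, with b a basis of the code,
   is injective on E x {0..<p}^k. *)

section \<open>Gaussian integers and congruence modulo \<pi>\<close>

lemma gauss_int_add [simp]: "gauss_int a \<Longrightarrow> gauss_int b \<Longrightarrow> gauss_int (a + b)"
  by (auto simp: gauss_int_def)

lemma gauss_int_diff [simp]: "gauss_int a \<Longrightarrow> gauss_int b \<Longrightarrow> gauss_int (a - b)"
  by (auto simp: gauss_int_def)

lemma gauss_int_mult [simp]: "gauss_int a \<Longrightarrow> gauss_int b \<Longrightarrow> gauss_int (a * b)"
  by (auto simp: gauss_int_def)

lemma gauss_int_uminus [simp]: "gauss_int a \<Longrightarrow> gauss_int (- a)"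
  by (auto simp: gauss_int_def)

lemma gauss_int_cnj [simp]: "gauss_int a \<Longrightarrow> gauss_int (cnj a)"
  by (auto simp: gauss_int_def)

lemma gauss_int_of_int [simp]: "gauss_int (of_int m)"
  by (auto simp: gauss_int_def)

lemma gauss_int_of_nat [simp]: "gauss_int (of_nat m)"
  by (auto simp: gauss_int_def)

lemma gauss_int_ii [simp]: "gauss_int \<i>"
  by (auto simp: gauss_int_def)

lemma gauss_int_0 [simp]: "gauss_int 0"
  by (auto simp: gauss_int_def)

lemma gauss_int_sum [simp]:
  "(\<And>j. j \<in> A \<Longrightarrow> gauss_int (f j)) \<Longrightarrow> gauss_int (\<Sum>j\<in>A. f j)"
  by (induction A rule: infinite_finite_induct) (auto simp: gauss_int_def)

lemma gvecs_gauss_int: "x \<in> gvecs n \<Longrightarrow> gauss_int (x i)"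
  by (cases "i < n") (auto simp: gvecs_def)

lemma gvecs_diff: "x \<in> gvecs n \<Longrightarrow> y \<in> gvecs n \<Longrightarrow> (\<lambda>i. x i - y i) \<in> gvecs n"
  by (simp add: gvecs_def)

lemma gauss_intE:
  assumes "gauss_int z"
  obtains a b :: int where "z = of_int a + of_int b * \<i>"
proof -
  from assms obtain a b where "Re z = of_int a" "Im z = of_int b"
    by (auto simp: gauss_int_def elim!: Ints_cases)
  then show ?thesis using that[of a b] by (auto simp: complex_eq_iff)
qed

lemma gcong_refl [simp]: "gcong \<pi> z z"
  unfolding gcong_def by (rule exI[of _ 0]) (auto simp: gauss_int_def)

lemma gcong_sym: "gcong \<pi> z w \<Longrightarrow> gcong \<pi> w z"
  unfolding gcong_def by (metis gauss_int_uminus minus_diff_eq mult_minus_right)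

lemma gcong_trans: "gcong \<pi> z w \<Longrightarrow> gcong \<pi> w u \<Longrightarrow> gcong \<pi> z u"
  unfolding gcong_def
proof (elim exE conjE)
  fix a b assume "gauss_int a" "z - w = \<pi> * a" "gauss_int b" "w - u = \<pi> * b"
  then show "\<exists>c. gauss_int c \<and> z - u = \<pi> * c"
    by (intro exI[of _ "a + b"]) (auto simp: algebra_simps)
qed

lemma gcong_add: "gcong \<pi> z w \<Longrightarrow> gcong \<pi> z' w' \<Longrightarrow> gcong \<pi> (z + z') (w + w')"
  unfolding gcong_def
proof (elim exE conjE)
  fix a b assume "gauss_int a" "z - w = \<pi> * a" "gauss_int b" "z' - w' = \<pi> * b"
  then show "\<exists>c. gauss_int c \<and> z + z' - (w + w') = \<pi> * c"
    by (intro exI[of _ "a + b"]) (auto simp: algebra_simps)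
qed

lemma gcong_mult_left: "gauss_int c \<Longrightarrow> gcong \<pi> z w \<Longrightarrow> gcong \<pi> (c * z) (c * w)"
  unfolding gcong_def
proof (elim exE conjE)
  fix a assume "gauss_int c" "gauss_int a" "z - w = \<pi> * a"
  then show "\<exists>d. gauss_int d \<and> c * z - c * w = \<pi> * d"
    by (intro exI[of _ "c * a"]) (auto simp: algebra_simps)
qed

lemma gcong_diff_cong: "z - w = z' - w' \<Longrightarrow> gcong \<pi> z w \<Longrightarrow> gcong \<pi> z' w'"
  by (simp add: gcong_def)

lemma gcong_zero_norm:
  assumes pi: "\<pi> * cnj \<pi> = of_nat p" and z: "gauss_int z" and c: "gcong \<pi> z 0"
  obtains e f u v :: int
  where "z = of_int e + of_int f * \<i>" and "e\<^sup>2 + f\<^sup>2 = int p * (u\<^sup>2 + v\<^sup>2)"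
proof -
  obtain g where g: "gauss_int g" "z = \<pi> * g" using c by (auto simp: gcong_def)
  obtain e f where ef: "z = of_int e + of_int f * \<i>" using z by (rule gauss_intE)
  obtain u v where uv: "g = of_int u + of_int v * \<i>" using g(1) by (rule gauss_intE)
  have "z * cnj z = (\<pi> * cnj \<pi>) * (g * cnj g)" using g(2) by (simp only: complex_cnj_mult ac_simps)
  also have "\<dots> = of_nat p * (g * cnj g)" by (simp only: pi)
  finally have "of_int (e\<^sup>2 + f\<^sup>2) = (of_int (int p * (u\<^sup>2 + v\<^sup>2)) :: complex)"
    using ef uv by (simp add: complex_eq_iff power2_eq_square algebra_simps)
  then have "e\<^sup>2 + f\<^sup>2 = int p * (u\<^sup>2 + v\<^sup>2)" by (rule of_int_eq_iff[THEN iffD1])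
  with ef show ?thesis by (rule that)
qed

lemma int_dvd_imp_gcong:
  assumes pi: "\<pi> * cnj \<pi> = of_nat p" and gp: "gauss_int \<pi>" and "int p dvd a - b"
  shows "gcong \<pi> (of_int a) (of_int b)"
proof -
  obtain q where q: "a - b = int p * q" using assms(3) by (elim dvdE)
  have "of_int a - of_int b = (of_int (a - b) :: complex)" by simp
  also have "\<dots> = of_nat p * of_int q" by (simp add: q)
  also have "\<dots> = \<pi> * (cnj \<pi> * of_int q)" by (simp only: pi[symmetric] mult.assoc)
  finally show ?thesis using gp unfolding gcong_def by (intro exI[of _ "cnj \<pi> * of_int q"]) simp
qed

section \<open>The residue map G_\<pi> \<rightarrow> {0..<p}\<close>

text \<open>The unit i is congruent to a rational integer modulo \<pi>: writing \<pi> = x + yi,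
  p does not divide y, and i \<equiv> -x y' where y y' \<equiv> 1 (mod p).\<close>
lemma ii_gcong_int:
  assumes p: "prime p" and pi: "\<pi> * cnj \<pi> = of_nat p" and gp: "gauss_int \<pi>"
  shows "\<exists>t::int. gcong \<pi> \<i> (of_int t)"
proof -
  obtain x y where xy: "\<pi> = of_int x + of_int y * \<i>" using gp by (rule gauss_intE)
  have "Re (\<pi> * cnj \<pi>) = real p" using pi by simp
  then have "real_of_int (x\<^sup>2 + y\<^sup>2) = real_of_int (int p)"
    using xy by (simp add: power2_eq_square)
  then have xyp: "x\<^sup>2 + y\<^sup>2 = int p" by (rule of_int_eq_iff[THEN iffD1])
  have pp: "prime (int p)" using p by simp
  have "\<not> int p dvd y"
  proof
    assume "int p dvd y"
    moreover from this have "int p dvd x"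
      using xyp pp by (metis dvd_add_left_iff dvd_mult2 dvd_refl power2_eq_square prime_dvd_power)
    ultimately have "int p * int p dvd x\<^sup>2 + y\<^sup>2"
      by (simp add: power2_eq_square mult_dvd_mono)
    then have "int p dvd 1" using xyp pp by (simp add: prime_gt_0_int)
    then show False using pp by (simp add: prime_int_iff)
  qed
  then have "coprime (int p) y" by (rule prime_imp_coprime[OF pp])
  then obtain s y' where "s * int p + y' * y = 1"
    using bezout_coefficients_fst_snd[of "int p" y] by auto
  then have yy': "y * y' = 1 - int p * s" by (simp add: algebra_simps)
  define g where "g = of_int y' + \<i> * cnj \<pi> * of_int s"
  have "\<i> - of_int (- x * y') = \<pi> * g"
  proof -
    have "\<i> - of_int (- x * y') = of_int y' * \<pi> + \<i> * (1 - of_int (y * y'))"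
      by (simp add: xy algebra_simps)
    also have "of_int (y * y') = 1 - \<pi> * cnj \<pi> * (of_int s :: complex)"
      using arg_cong[OF yy', of "of_int :: int \<Rightarrow> complex"] pi by simp
    finally show ?thesis by (simp add: g_def algebra_simps)
  qed
  moreover have "gauss_int g" using gp by (auto simp: g_def)
  ultimately show ?thesis unfolding gcong_def by blast
qed

lemma gauss_int_has_residue:
  assumes p: "prime p" and pi: "\<pi> * cnj \<pi> = of_nat p" and gp: "gauss_int \<pi>"
    and z: "gauss_int z"
  shows "\<exists>r<p. gcong \<pi> z (of_nat r)"
proof -
  obtain t where t: "gcong \<pi> \<i> (of_int t)" using ii_gcong_int[OF assms(1-3)] by blast
  obtain a b where ab: "z = of_int a + of_int b * \<i>" using z by (rule gauss_intE)
  have "gcong \<pi> (of_int b * \<i>) (of_int b * of_int t)"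
    by (rule gcong_mult_left[OF gauss_int_of_int t])
  then have "gcong \<pi> (of_int a + of_int b * \<i>) (of_int a + of_int b * of_int t)"
    by (rule gcong_add[OF gcong_refl])
  then have "gcong \<pi> z (of_int (a + b * t))" by (simp add: ab)
  moreover have "gcong \<pi> (of_int (a + b * t)) (of_int ((a + b * t) mod int p))"
    by (rule int_dvd_imp_gcong[OF pi gp]) (simp add: mod_eq_dvd_iff[symmetric])
  moreover have "0 \<le> (a + b * t) mod int p" "(a + b * t) mod int p < int p"
    using prime_gt_0_nat[OF p] by simp_all
  ultimately show ?thesis
    by (intro exI[of _ "nat ((a + b * t) mod int p)"]) (auto intro: gcong_trans)
qed

lemma residues_distinct:
  assumes p: "prime p" and pi: "\<pi> * cnj \<pi> = of_nat p"
    and ab: "a < p" "b < p" and c: "gcong \<pi> (of_nat a) (of_nat b)"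
  shows "a = b"
proof -
  have "gcong \<pi> (of_int (int a - int b)) 0"
    using c by (simp add: gcong_def)
  then obtain e f u v where ef: "of_int (int a - int b) = (of_int e + of_int f * \<i> :: complex)"
      and norm: "e\<^sup>2 + f\<^sup>2 = int p * (u\<^sup>2 + v\<^sup>2)"
    using gcong_zero_norm[OF pi gauss_int_of_int] by blast
  have "e = int a - int b" "f = 0" using ef by (simp_all add: complex_eq_iff)
  with norm have "int p dvd (int a - int b)\<^sup>2" by simp
  then have "int p dvd int a - int b" using p by (simp add: prime_dvd_power_iff)
  then obtain q where q: "int a - int b = int p * q" by (elim dvdE)
  have "q = 0"
  proof (rule ccontr)
    assume "q \<noteq> 0"
    then have "1 \<le> \<bar>q\<bar>" by linarith
    then have "int p \<le> \<bar>int p * q\<bar>" by (simp add: abs_mult mult_le_cancel_left1)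
    with q ab show False by linarith
  qed
  with q show ?thesis by simp
qed

definition residue :: "complex \<Rightarrow> complex \<Rightarrow> nat" where
  "residue \<pi> z = (LEAST r. gcong \<pi> z (of_nat r))"

lemma residue_spec:
  assumes "prime p" "\<pi> * cnj \<pi> = of_nat p" "gauss_int \<pi>" "gauss_int z"
  shows "residue \<pi> z < p" and "gcong \<pi> z (of_nat (residue \<pi> z))"
proof -
  obtain r where r: "r < p" "gcong \<pi> z (of_nat r)"
    using gauss_int_has_residue[OF assms] by blast
  show "gcong \<pi> z (of_nat (residue \<pi> z))"
    unfolding residue_def by (rule LeastI[of _ r]) (rule r(2))
  show "residue \<pi> z < p"
    unfolding residue_def using Least_le[of _ r] r by fastforce
qed

section \<open>Small Gaussian integers are pairwise incongruent\<close>

definition taxi :: "complex \<Rightarrow> real" where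
  "taxi z = \<bar>Re z\<bar> + \<bar>Im z\<bar>"

definition small :: "complex \<Rightarrow> bool" where
  "small z \<longleftrightarrow> gauss_int z \<and> taxi z \<le> 2"

lemma taxi_0 [simp]: "taxi 0 = 0"
  by (simp add: taxi_def)

lemma small_0 [simp]: "small 0"
  by (simp add: small_def)

lemma mannheim_weight_le_taxi:
  assumes "gauss_int z"
  shows "real (mannheim_weight \<pi> z) \<le> taxi z"
proof -
  obtain a b where z: "z = of_int a + of_int b * \<i>" using assms by (rule gauss_intE)
  have "mannheim_weight \<pi> z \<le> nat (\<bar>a\<bar> + \<bar>b\<bar>)"
    unfolding mannheim_weight_def by (intro Least_le exI[of _ a] exI[of _ b]) (simp add: z)
  then show ?thesis by (simp add: taxi_def z)
qed

lemma vec_mannheim_weight_le_taxi: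
  assumes "\<And>m. m < n \<Longrightarrow> gauss_int (x m)"
  shows "real (vec_mannheim_weight \<pi> n x) \<le> (\<Sum>m<n. taxi (x m))"
  unfolding vec_mannheim_weight_def of_nat_sum
  by (rule sum_mono) (simp add: assms mannheim_weight_le_taxi)

lemma taxi4_large_norm:
  fixes e f :: int
  assumes "\<bar>e\<bar> + \<bar>f\<bar> \<le> 4" and "13 \<le> e\<^sup>2 + f\<^sup>2"
  shows "e\<^sup>2 + f\<^sup>2 = 16"
proof -
  have "e \<in> {-4..4}" "f \<in> {-4..4}" using assms(1) by auto
  then have "e \<in> {-4,-3,-2,-1,0,1,2,3,4}" "f \<in> {-4,-3,-2,-1,0,1,2,3,4}" by auto
  then show ?thesis using assms by (auto simp: power2_eq_square)
qed

text \<open>Two small Gaussian integers congruent modulo \<pi> are equal: their difference has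
  norm at most 16, a multiple of the odd number p \<ge> 13, hence norm 0.\<close>
lemma small_incongruent:
  assumes p: "odd p" "13 \<le> p" and pi: "\<pi> * cnj \<pi> = of_nat p"
    and z: "small z" and w: "small w" and c: "gcong \<pi> z w"
  shows "z = w"
proof -
  have "gauss_int (z - w)" "gcong \<pi> (z - w) 0"
    using z w c by (auto simp: small_def gcong_def)
  then obtain e f u v where ef: "z - w = of_int e + of_int f * \<i>"
      and norm: "e\<^sup>2 + f\<^sup>2 = int p * (u\<^sup>2 + v\<^sup>2)"
    using gcong_zero_norm[OF pi] by blast
  have "\<bar>Re (z - w)\<bar> + \<bar>Im (z - w)\<bar> \<le> 4" using z w by (auto simp: small_def taxi_def)
  then have taxi4: "\<bar>e\<bar> + \<bar>f\<bar> \<le> 4" using ef by simp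
  have "u\<^sup>2 + v\<^sup>2 = 0"
  proof (rule ccontr)
    assume "u\<^sup>2 + v\<^sup>2 \<noteq> 0"
    then have N: "1 \<le> u\<^sup>2 + v\<^sup>2" by (smt (verit) zero_le_power2)
    then have "int p \<le> e\<^sup>2 + f\<^sup>2" using norm by (simp add: mult_le_cancel_left1)
    then have N16: "int p * (u\<^sup>2 + v\<^sup>2) = 16"
      using taxi4_large_norm[OF taxi4] p(2) norm by linarith
    have "u\<^sup>2 + v\<^sup>2 < 2"
    proof (rule ccontr)
      assume "\<not> u\<^sup>2 + v\<^sup>2 < 2"
      then have "int p * 2 \<le> int p * (u\<^sup>2 + v\<^sup>2)" by (intro mult_left_mono) auto
      with N16 p(2) show False by linarith
    qed
    with N have "u\<^sup>2 + v\<^sup>2 = 1" by linarith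
    with N16 have "p = 16" by simp
    with p(1) show False by simp
  qed
  then have "e = 0" "f = 0" using norm by (auto simp: sum_power2_eq_zero_iff)
  then show ?thesis using ef by simp
qed

section \<open>8n^2 + 1 error patterns of weight at most 2\<close>

text \<open>For i, j < n and c < 8 we define a vector supported on {i, j}.  For i = j its entry
  is one of the eight elements \<plusminus>2, \<plusminus>2i, \<plusminus>1\<plusminus>i of taxicab size 2.  For i \<noteq> j the entry
  at the smaller index is any of the four units and the entry at the larger index is
  \<plusminus>1 if i < j and \<plusminus>i if j < i, so the pairs (i, j) and (j, i) together give all
  16 vectors with unit entries at both positions.\<close>
definition unit4 :: "nat \<Rightarrow> complex" where
  "unit4 c = (if c mod 4 = 0 then 1 else if c mod 4 = 1 then -1 else if c mod 4 = 2 then \<i> else -\<i>)"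

definition sign2 :: "nat \<Rightarrow> complex" where
  "sign2 c = (if c < 4 then 1 else -1)"

definition err_fst :: "nat \<Rightarrow> nat \<Rightarrow> nat \<Rightarrow> complex" where
  "err_fst i j c = (if j < i then \<i> * sign2 c else unit4 c)"

definition err_snd :: "nat \<Rightarrow> nat \<Rightarrow> nat \<Rightarrow> complex" where
  "err_snd i j c = (if i < j then sign2 c else if j < i then unit4 c
                    else if c < 4 then unit4 c else \<i> * unit4 c)"

definition err_vec :: "nat \<Rightarrow> nat \<Rightarrow> nat \<Rightarrow> nat \<Rightarrow> complex" where
  "err_vec i j c = (\<lambda>m. (if m = i then err_fst i j c else 0) + (if m = j then err_snd i j c else 0))"

definition error_patterns :: "nat \<Rightarrow> (nat \<Rightarrow> complex) set" where
  "error_patterns n =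
     insert (\<lambda>_. 0) ((\<lambda>(i, j, c). err_vec i j c) ` ({..<n} \<times> {..<n} \<times> {..<8}))"

lemma less_8_cases: "c < (8::nat) \<Longrightarrow> c \<in> {0, 1, 2, 3, 4, 5, 6, 7}"
  by auto

lemma err_fst_unit: "err_fst i j c \<noteq> 0" "taxi (err_fst i j c) = 1"
  by (auto simp: err_fst_def unit4_def sign2_def taxi_def)

lemma err_snd_unit: "err_snd i j c \<noteq> 0" "taxi (err_snd i j c) = 1"
  by (auto simp: err_snd_def unit4_def sign2_def taxi_def)

lemma err_vec_support: "c < 8 \<Longrightarrow> err_vec i j c m \<noteq> 0 \<longleftrightarrow> m = i \<or> m = j"
  using err_fst_unit(1) err_snd_unit(1)
  by (drule_tac less_8_cases) (auto simp: err_vec_def err_fst_def err_snd_def unit4_def complex_eq_iff)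

lemma err_vec_small: "c < 8 \<Longrightarrow> small (err_vec i j c m)"
  by (drule less_8_cases)
     (auto simp: err_vec_def small_def err_fst_def err_snd_def unit4_def sign2_def gauss_int_def taxi_def)

lemma err_vec_taxi:
  assumes "i < n" "j < n"
  shows "(\<Sum>m<n. taxi (err_vec i j c m)) \<le> 2"
proof -
  have "(\<Sum>m<n. taxi (err_vec i j c m))
        \<le> (\<Sum>m<n. (if m = i then taxi (err_fst i j c) else 0) + (if m = j then taxi (err_snd i j c) else 0))"
    by (rule sum_mono) (auto simp: err_vec_def taxi_def)
  also have "\<dots> = 2" using assms by (simp add: sum.distrib err_fst_unit err_snd_unit)
  finally show ?thesis .
qed

lemma unit4_sign2_inj:
  "c < 8 \<Longrightarrow> c' < 8 \<Longrightarrow> unit4 c = unit4 c' \<Longrightarrow> sign2 c = sign2 c' \<Longrightarrow> c = c'"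
  by (drule less_8_cases, drule less_8_cases) (auto simp: unit4_def sign2_def complex_eq_iff)

lemma diagonal_inj:
  "c < 8 \<Longrightarrow> c' < 8 \<Longrightarrow> err_fst i i c + err_snd i i c = err_fst i i c' + err_snd i i c' \<Longrightarrow> c = c'"
  by (drule less_8_cases, drule less_8_cases)
     (auto simp: err_fst_def err_snd_def unit4_def complex_eq_iff)

lemma sign2_ne_ii_sign2: "sign2 c \<noteq> \<i> * sign2 c'"
  by (auto simp: sign2_def complex_eq_iff)

lemma err_vec_inj:
  assumes c: "c < 8" "c' < 8" and eq: "err_vec i j c = err_vec i' j' c'"
  shows "i = i' \<and> j = j' \<and> c = c'"
proof -
  have supp: "m = i \<or> m = j \<longleftrightarrow> m = i' \<or> m = j'" for m
    using err_vec_support[OF c(1), of i j m] err_vec_support[OF c(2), of i' j' m] eq by simp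
  have v: "err_vec i j c m = err_vec i' j' c' m" for m using eq by simp
  consider "i = j" | "i < j" | "j < i" by linarith
  then show ?thesis
  proof cases
    case 1
    then have "i' = i" "j' = i" using supp by blast+
    with v[of i] 1 show ?thesis using diagonal_inj[OF c] by (simp add: err_vec_def)
  next
    case 2
    then consider "i' = i" "j' = j" | "i' = j" "j' = i" using supp by (metis less_irrefl)
    then show ?thesis
    proof cases
      case 1
      then have "unit4 c = unit4 c'" "sign2 c = sign2 c'"
        using v[of i] v[of j] \<open>i < j\<close> by (simp_all add: err_vec_def err_fst_def err_snd_def)
      with 1 show ?thesis using unit4_sign2_inj[OF c] by simp
    next
      case 2
      then have "sign2 c = \<i> * sign2 c'"
        using v[of j] \<open>i < j\<close> by (simp add: err_vec_def err_fst_def err_snd_def)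
      then show ?thesis using sign2_ne_ii_sign2 by blast
    qed
  next
    case 3
    then consider "i' = i" "j' = j" | "i' = j" "j' = i" using supp by (metis less_irrefl)
    then show ?thesis
    proof cases
      case 1
      then have "sign2 c = sign2 c'" "unit4 c = unit4 c'"
        using v[of i] v[of j] \<open>j < i\<close> by (simp_all add: err_vec_def err_fst_def err_snd_def)
      with 1 show ?thesis using unit4_sign2_inj[OF c] by simp
    next
      case 2
      then have "\<i> * sign2 c = sign2 c'"
        using v[of i] \<open>j < i\<close> by (simp add: err_vec_def err_fst_def err_snd_def)
      then show ?thesis using sign2_ne_ii_sign2 by metis
    qed
  qed
qed

lemma card_error_patterns: "card (error_patterns n) = 8 * n\<^sup>2 + 1"
proof -
  define D where "D = {..<n} \<times> {..<n} \<times> {..<(8::nat)}"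
  have "inj_on (\<lambda>(i, j, c). err_vec i j c) D"
    by (auto simp: D_def inj_on_def dest: err_vec_inj)
  moreover have "(\<lambda>_. 0) \<notin> (\<lambda>(i, j, c). err_vec i j c) ` D"
  proof
    assume "(\<lambda>_. 0) \<in> (\<lambda>(i, j, c). err_vec i j c) ` D"
    then obtain i j c where "c < 8" and zero: "(\<lambda>_. 0) = err_vec i j c" by (auto simp: D_def)
    then show False using err_vec_support[of c i j i] fun_cong[OF zero, of i] by simp
  qed
  ultimately have "card (error_patterns n) = Suc (card D)"
    by (simp add: error_patterns_def D_def card_image)
  then show ?thesis by (simp add: D_def card_cartesian_product power2_eq_square)
qed

lemma error_patternsE:
  assumes "x \<in> error_patterns n"
  obtains "x = (\<lambda>_. 0)"
    | i j c where "i < n" "j < n" "c < 8" "x = err_vec i j c"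
  using assms by (auto simp: error_patterns_def)

lemma error_patterns_small: "x \<in> error_patterns n \<Longrightarrow> small (x m)"
  by (erule error_patternsE) (simp_all add: err_vec_small)

lemma error_patterns_gvecs: "error_patterns n \<subseteq> gvecs n"
proof
  fix x assume x: "x \<in> error_patterns n"
  have "x m = 0" if "n \<le> m" for m
    using x
  proof (rule error_patternsE)
    fix i j c assume "i < n" "j < n" "c < 8" "x = err_vec i j c"
    then show "x m = 0" using err_vec_support[of c i j m] that by auto
  qed simp
  then show "x \<in> gvecs n"
    using error_patterns_small[OF x] by (simp add: gvecs_def small_def)
qed

lemma error_patterns_weight:
  assumes x: "x \<in> error_patterns n"
  shows "vec_mannheim_weight \<pi> n x \<le> 2"
proof -
  have "real (vec_mannheim_weight \<pi> n x) \<le> (\<Sum>m<n. taxi (x m))"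
    using error_patterns_small[OF x] by (intro vec_mannheim_weight_le_taxi) (simp add: small_def)
  also have "\<dots> \<le> 2"
    using x by (rule error_patternsE) (simp_all add: err_vec_taxi)
  finally show ?thesis by linarith
qed

section \<open>Counting cosets of a linear code\<close>

definition lincomb :: "(nat \<Rightarrow> nat \<Rightarrow> complex) \<Rightarrow> nat \<Rightarrow> (nat \<Rightarrow> complex) \<Rightarrow> nat \<Rightarrow> complex" where
  "lincomb b k l = (\<lambda>i. \<Sum>j<k. l j * b j i)"

lemma lincomb_diff: "lincomb b k l i - lincomb b k l' i = lincomb b k (\<lambda>j. l j - l' j) i"
  by (simp add: lincomb_def sum_subtractf left_diff_distrib)

lemma linear_code_lincomb:
  assumes lc: "linear_code \<pi> n k' C"
    and b: "\<And>j. j < k \<Longrightarrow> b j \<in> C" and l: "\<And>j. j < k \<Longrightarrow> gauss_int (l j)"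
  shows "lincomb b k l \<in> C"
  using b l
proof (induction k)
  case 0
  then show ?case using lc by (simp add: linear_code_def lincomb_def)
next
  case (Suc k)
  have "lincomb b k l \<in> C" "(\<lambda>i. l k * b k i) \<in> C"
    using Suc lc by (auto simp: linear_code_def)
  then have "(\<lambda>i. lincomb b k l i + l k * b k i) \<in> C"
    using lc by (simp add: linear_code_def)
  then show ?case by (simp add: lincomb_def)
qed

lemma linear_code_basis:
  assumes "linear_code \<pi> n k C"
  obtains b where "\<And>j. j < k \<Longrightarrow> b j \<in> C"
    and "\<And>l. \<forall>j<k. gauss_int (l j) \<Longrightarrow> vcong \<pi> n (lincomb b k l) (\<lambda>i. 0)
           \<Longrightarrow> \<forall>j<k. gcong \<pi> (l j) 0"
proof -
  obtain b where b: "\<forall>j<k. b j \<in> C"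
    and indep: "\<forall>l. (\<forall>j<k. gauss_int (l j)) \<and> vcong \<pi> n (\<lambda>i. \<Sum>j<k. l j * b j i) (\<lambda>i. 0)
                  \<longrightarrow> (\<forall>j<k. gcong \<pi> (l j) 0)"
    using assms unfolding linear_code_def by (elim conjE exE) (rule that, assumption+)
  show ?thesis
  proof (rule that)
    show "b j \<in> C" if "j < k" for j using b that by simp
    show "\<forall>j<k. gcong \<pi> (l j) 0"
      if "\<forall>j<k. gauss_int (l j)" "vcong \<pi> n (lincomb b k l) (\<lambda>i. 0)" for l
      using indep that unfolding lincomb_def by blast
  qed
qed

lemma residue_eq_imp_gcong:
  assumes "prime p" "\<pi> * cnj \<pi> = of_nat p" "gauss_int \<pi>" "gauss_int z" "gauss_int w"
    and "residue \<pi> z = residue \<pi> w"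
  shows "gcong \<pi> z w"
  using residue_spec(2)[OF assms(1-4)] residue_spec(2)[OF assms(1-3,5)] assms(6)
  by (metis gcong_sym gcong_trans)

text \<open>Translates e + \<Sum>_j l_j b_j with e \<in> E and l \<in> {0..<p}^k are pairwise incongruent,
  if no two elements of E differ by a codeword: congruent translates would make
  e - e' congruent to a codeword, hence a codeword, hence e = e'; and then the
  independence of the basis modulo \<pi> forces l = l'.\<close>
lemma translates_incongruent:
  assumes p: "prime p" and pi: "\<pi> * cnj \<pi> = of_nat p"
    and lc: "linear_code \<pi> n k C" and E: "E \<subseteq> gvecs n"
    and sep: "\<And>x y. x \<in> E \<Longrightarrow> y \<in> E \<Longrightarrow> (\<lambda>i. x i - y i) \<in> C \<Longrightarrow> x = y"
    and b: "\<And>j. j < k \<Longrightarrow> b j \<in> C"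
    and indep: "\<And>l. \<forall>j<k. gauss_int (l j) \<Longrightarrow> vcong \<pi> n (lincomb b k l) (\<lambda>i. 0)
                  \<Longrightarrow> \<forall>j<k. gcong \<pi> (l j) 0"
    and x: "x \<in> E" "l \<in> {..<k} \<rightarrow>\<^sub>E {..<p}" and y: "y \<in> E" "l' \<in> {..<k} \<rightarrow>\<^sub>E {..<p}"
    and cong: "vcong \<pi> n (\<lambda>i. x i + lincomb b k (of_nat \<circ> l) i)
                           (\<lambda>i. y i + lincomb b k (of_nat \<circ> l') i)"
  shows "x = y \<and> l = l'"
proof -
  define d where "d = (\<lambda>j. of_nat (l' j) - (of_nat (l j) :: complex))"
  have d: "lincomb b k (of_nat \<circ> l') i - lincomb b k (of_nat \<circ> l) i = lincomb b k d i" for i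
    by (simp add: lincomb_diff d_def)
  have "lincomb b k d \<in> C"
    using linear_code_lincomb[OF lc b] by (simp add: d_def)
  moreover have "vcong \<pi> n (\<lambda>i. x i - y i) (lincomb b k d)"
    unfolding vcong_def
  proof (intro allI impI)
    fix i assume "i < n"
    with cong have "gcong \<pi> (x i + lincomb b k (of_nat \<circ> l) i) (y i + lincomb b k (of_nat \<circ> l') i)"
      by (simp add: vcong_def)
    then show "gcong \<pi> (x i - y i) (lincomb b k d i)"
      by (rule gcong_diff_cong[rotated]) (simp add: algebra_simps flip: d)
  qed
  moreover have "(\<lambda>i. x i - y i) \<in> gvecs n" using x(1) y(1) E by (blast intro: gvecs_diff)
  moreover have "\<And>z w. z \<in> gvecs n \<Longrightarrow> w \<in> C \<Longrightarrow> vcong \<pi> n z w \<Longrightarrow> z \<in> C"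
    using lc unfolding linear_code_def by (elim conjE) blast
  ultimately have "x = y" using sep x(1) y(1) by blast
  have "vcong \<pi> n (lincomb b k d) (\<lambda>i. 0)"
    unfolding vcong_def
  proof (intro allI impI)
    fix i assume "i < n"
    with cong \<open>x = y\<close> have "gcong \<pi> (y i + lincomb b k (of_nat \<circ> l') i) (y i + lincomb b k (of_nat \<circ> l) i)"
      by (simp add: vcong_def gcong_sym)
    then show "gcong \<pi> (lincomb b k d i) 0"
      by (rule gcong_diff_cong[rotated]) (simp flip: d)
  qed
  then have "gcong \<pi> (of_nat (l' j)) (of_nat (l j))" if "j < k" for j
    using indep[of d] that by (simp add: d_def gcong_def)
  moreover have "l j < p" "l' j < p" if "j < k" for j
    using x(2) y(2) that by (auto simp: PiE_iff)
  ultimately have "l' j = l j" if "j < k" for j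
    using that by (intro residues_distinct[OF p pi]) simp_all
  then have "l = l'" using x(2) y(2) by (intro PiE_ext) auto
  with \<open>x = y\<close> show ?thesis by simp
qed

text \<open>Counting the translates above through their
  coordinatewise residues embeds E \<times> {0..<p}^k into {0..<p}^n.\<close>
lemma coset_packing:
  assumes p: "prime p" and pi: "\<pi> * cnj \<pi> = of_nat p" and gp: "gauss_int \<pi>"
    and lc: "linear_code \<pi> n k C" and E: "E \<subseteq> gvecs n"
    and sep: "\<And>x y. x \<in> E \<Longrightarrow> y \<in> E \<Longrightarrow> (\<lambda>i. x i - y i) \<in> C \<Longrightarrow> x = y"
  shows "card E * p ^ k \<le> p ^ n"
proof -
  obtain b where b: "\<And>j. j < k \<Longrightarrow> b j \<in> C"
    and indep: "\<And>l. \<forall>j<k. gauss_int (l j) \<Longrightarrow> vcong \<pi> n (lincomb b k l) (\<lambda>i. 0)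
                  \<Longrightarrow> \<forall>j<k. gcong \<pi> (l j) 0"
    using linear_code_basis[OF lc] by blast
  have "C \<subseteq> gvecs n" using lc by (simp add: linear_code_def)
  then have b_gauss: "gauss_int (b j i)" if "j < k" for j i
    using b[OF that] by (intro gvecs_gauss_int) auto
  define v where "v x l i = x i + lincomb b k (of_nat \<circ> l) i" for x l i
  have v_gauss: "gauss_int (v x l i)" if "x \<in> E" for x l i
  proof -
    have "gauss_int (x i)" using that E by (intro gvecs_gauss_int) auto
    then show ?thesis using b_gauss
      unfolding v_def lincomb_def by (intro gauss_int_add gauss_int_sum gauss_int_mult) auto
  qed
  define L where "L = {..<k} \<rightarrow>\<^sub>E {..<p}"
  define T where "T = {..<n} \<rightarrow>\<^sub>E {..<p}"
  define h where "h = (\<lambda>(x, l). restrict (\<lambda>i. residue \<pi> (v x l i)) {..<n})"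
  have "h (x, l) \<in> T" if "x \<in> E" for x l
    using residue_spec(1)[OF p pi gp v_gauss[OF that]] by (simp add: h_def T_def)
  then have "h ` (E \<times> L) \<subseteq> T" by auto
  moreover have "inj_on h (E \<times> L)"
  proof (rule inj_onI, clarify)
    fix x l y l' assume x: "x \<in> E" "l \<in> L" and y: "y \<in> E" "l' \<in> L" and eq: "h (x, l) = h (y, l')"
    have "residue \<pi> (v x l i) = residue \<pi> (v y l' i)" if "i < n" for i
      using fun_cong[OF eq, of i] that by (simp add: h_def)
    then have "vcong \<pi> n (v x l) (v y l')"
      unfolding vcong_def
      by (intro allI impI residue_eq_imp_gcong[OF p pi gp v_gauss[OF x(1)] v_gauss[OF y(1)]])
    then show "x = y \<and> l = l'"
      using x y unfolding v_def L_def by (intro translates_incongruent[OF p pi lc E sep b indep])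
  qed
  moreover have "finite T" by (simp add: T_def finite_PiE)
  ultimately have "card (E \<times> L) \<le> card T" by (intro card_inj_on_le)
  then show ?thesis by (simp add: card_cartesian_product L_def T_def card_PiE)
qed

text \<open>Distinct error patterns never differ by a codeword of a code correcting all
  errors of weight at most 2: such a code forces them to be congruent, and congruent
  small entries are equal.\<close>
lemma error_patterns_separated:
  assumes p: "odd p" "13 \<le> p" and pi: "\<pi> * cnj \<pi> = of_nat p"
    and cw: "corrects_weight2 \<pi> n C"
    and x: "x \<in> error_patterns n" and y: "y \<in> error_patterns n"
    and diff: "(\<lambda>i. x i - y i) \<in> C"
  shows "x = y"
proof
  fix i
  have xy: "x \<in> gvecs n" "y \<in> gvecs n" using x y error_patterns_gvecs by blast+
  have "vcong \<pi> n x y"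
    using cw xy error_patterns_weight[OF x] error_patterns_weight[OF y] diff
    unfolding corrects_weight2_def by blast
  then show "x i = y i"
  proof (cases "i < n")
    case True
    with \<open>vcong \<pi> n x y\<close> show ?thesis
      by (intro small_incongruent[OF p pi] error_patterns_small[OF x] error_patterns_small[OF y])
         (simp add: vcong_def)
  qed (use xy in \<open>simp add: gvecs_def\<close>)
qed

lemma le_pow_diff:
  fixes m p :: nat
  assumes "m * p ^ k \<le> p ^ n" and "0 < p"
  shows "m \<le> p ^ (n - k)"
proof (cases "k \<le> n")
  case True
  then have "m * p ^ k \<le> p ^ (n - k) * p ^ k"
    using assms(1) by (simp flip: power_add)
  then show ?thesis using assms(2) by simp
next
  case False
  then have "p ^ n \<le> p ^ k" using assms(2) by (intro power_increasing) auto
  with assms(1) have "m * p ^ k \<le> 1 * p ^ k" by linarith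
  moreover have "0 < p ^ k" using assms(2) by simp
  ultimately have "m \<le> 1" by (rule mult_right_le_imp_le)
  with False show ?thesis by simp
qed

theorem theorem5:
  fixes p n k :: nat and \<pi> :: complex and C :: "(nat \<Rightarrow> complex) set"
  assumes "prime p" and "p mod 4 = 1" and "p \<ge> 13"
    and "gauss_int \<pi>" and "\<pi> * cnj \<pi> = of_nat p"
    and "linear_code \<pi> n k C"
    and "corrects_weight2 \<pi> n C"
  shows "p ^ (n - k) \<ge> 8 * n\<^sup>2 + 1"
proof -
  have "odd p" using assms(2) by presburger
  then have "card (error_patterns n) * p ^ k \<le> p ^ n"
    by (intro coset_packing[OF assms(1,5,4,6) error_patterns_gvecs]
              error_patterns_separated[OF _ assms(3,5,7)])
  then show ?thesis
    by (intro le_pow_diff) (simp_all add: card_error_patterns prime_gt_0_nat[OF assms(1)])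
qed

end
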